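(* Let $n \ge 3$. The commutator subgroup $TW_n'$ has the following presentation. Generators: $\beta(S;j)$ for every $j \in \{1,\dots,n-2\}$ and every (possibly empty) subset $S \subseteq \{1,\dots,j-1\}$. Defining relations: for every $t \in \{1,\dots,n-2\}$, every $j$ with $1 \le j \le t-2$, and every subset $S \subseteq \{1,\dots,t-1\}$: (i) if $j \in S$ and $j+1 \notin S$, then $\beta(S;t) = \beta(S\setminus\{j\};t)$; (ii) if $j \in S$ and $j+1 \in S$, then, writing $S_{<j} = \{i \in S : i < j\}$, $$\beta(S;t) = \beta(S_{<j};j)^{-1}\,\beta(S\setminus\{j\};t)\,\beta(S_{<j};j).$$ Here the generator $\beta(S;j)$ corresponds to the element of $TW_n$ defined in the context.
   Context: For $n \ge 2$, the twin group $TW_n$ is the group with generators $\tau_1,\dots,\tau_{n-1}$ and defining relations $\tau_i^2=1$ for all $i$, and $\tau_i\tau_j=\tau_j\tau_i$ whenever $|i-j|>1$. $G'$ denotes the commutator subgroup of a group $G$. For $1 \le j \le n-2$ and a subset $S=\{i_1<i_2<\dots<i_s\} \subseteq \{1,\dots,j-1\}$ (possibly empty), define $$\beta(S;j) := \tau_{i_1}\tau_{i_2}\cdots\tau_{i_s}\,(\tau_{j+1}\tau_j\tau_{j+1}\tau_j)\,\tau_{i_s}\cdots\tau_{i_2}\tau_{i_1}\in TW_n,$$ so that $\beta(\emptyset;j)=\tau_{j+1}\tau_j\tau_{j+1}\tau_j$. *)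

theory Defs
  imports "HOL-Algebra.Algebra"
begin

text \<open>The twin group TW_n, constructed concretely as words over the letters
  1..n-1 (letter i stands for tau_i) modulo the congruence generated by the
  defining relations tau_i tau_i = 1 and tau_i tau_j = tau_j tau_i for |i-j|>1.\<close>

definition tw_letters :: "nat \<Rightarrow> nat list set" where
  "tw_letters n = {w. set w \<subseteq> {1..<n}}"

inductive tw_eq :: "nat \<Rightarrow> nat list \<Rightarrow> nat list \<Rightarrow> bool" for n where
  tw_refl: "w \<in> tw_letters n \<Longrightarrow> tw_eq n w w"
| tw_sym: "tw_eq n u w \<Longrightarrow> tw_eq n w u"
| tw_trans: "tw_eq n u v \<Longrightarrow> tw_eq n v w \<Longrightarrow> tw_eq n u w"
| tw_square: "xs \<in> tw_letters n \<Longrightarrow> ys \<in> tw_letters n \<Longrightarrow> i \<in> {1..<n} \<Longrightarrow>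
     tw_eq n (xs @ [i, i] @ ys) (xs @ ys)"
| tw_comm: "xs \<in> tw_letters n \<Longrightarrow> ys \<in> tw_letters n \<Longrightarrow> i \<in> {1..<n} \<Longrightarrow> j \<in> {1..<n} \<Longrightarrow>
     (i + 1 < j \<or> j + 1 < i) \<Longrightarrow> tw_eq n (xs @ [i, j] @ ys) (xs @ [j, i] @ ys)"

definition tw_class :: "nat \<Rightarrow> nat list \<Rightarrow> nat list set" where
  "tw_class n w = {v. tw_eq n v w}"

definition TW :: "nat \<Rightarrow> nat list set monoid" where
  "TW n = \<lparr> carrier = tw_class n ` tw_letters n,
            monoid.mult = (\<lambda>A B. {v. \<exists>x\<in>A. \<exists>y\<in>B. tw_eq n v (x @ y)}),
            one = tw_class n [] \<rparr>"

definition tau :: "nat \<Rightarrow> nat \<Rightarrow> nat list set" where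
  "tau n i = tw_class n [i]"

definition beta :: "nat \<Rightarrow> nat set \<Rightarrow> nat \<Rightarrow> nat list set" where
  "beta n S j = tw_class n (sorted_list_of_set S @ [j+1, j, j+1, j] @ rev (sorted_list_of_set S))"

definition beta_index :: "nat \<Rightarrow> (nat set \<times> nat) set" where
  "beta_index n = {(S, j). j \<in> {1..n-2} \<and> S \<subseteq> {1..<j}}"

definition beta_relations :: "nat \<Rightarrow> ('h, 'c) monoid_scheme \<Rightarrow> (nat set \<times> nat \<Rightarrow> 'h) \<Rightarrow> bool" where
  "beta_relations n H f \<longleftrightarrow>
    (\<forall>t \<in> {1..n-2}. \<forall>j. 1 \<le> j \<and> j + 2 \<le> t \<longrightarrow> (\<forall>S. S \<subseteq> {1..<t} \<longrightarrow>
       (j \<in> S \<and> j + 1 \<notin> S \<longrightarrow> f (S, t) = f (S - {j}, t)) \<and>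
       (j \<in> S \<and> j + 1 \<in> S \<longrightarrow>
          f (S, t) = inv\<^bsub>H\<^esub> (f ({i \<in> S. i < j}, j)) \<otimes>\<^bsub>H\<^esub> f (S - {j}, t)
                     \<otimes>\<^bsub>H\<^esub> f ({i \<in> S. i < j}, j))))"

end

theory Submission
  imports Defs
begin

text \<open>
  Recording which letters occur an odd number of times in a word is the abelianisation of
  \<open>TW\<^sub>n\<close> onto the subsets of \<open>{1..n-1}\<close> under symmetric difference; so the derived
  subgroup \<open>K\<close> lies in its kernel, and the words \<open>sorted_list_of_set s\<close> form a Schreier
  transversal of that kernel. The Reidemeister--Schreier rewriting along this transversal sends
  \<open>\<tau>\<^sub>i\<close>, read at the coset \<open>s\<close>, to \<open>1\<close>, to \<open>\<beta>(s \<inter> {..<i}; i)\<close> or to its inverse,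
  according as \<open>i + 1 \<notin> s\<close>, \<open>i \<notin> s \<ni> i + 1\<close> or \<open>i, i + 1 \<in> s\<close>.

  Given values \<open>f(S, j)\<close> in a group \<open>H\<close> satisfying (i) and (ii), the same rewriting with
  values in \<open>H\<close> kills \<open>\<tau>\<^sub>i\<^sup>2\<close> and respects the far commutations: for the latter,
  conjugation by the image of \<open>\<tau>\<^sub>i\<close> must move \<open>f(S, j)\<close> to \<open>f(S \<triangle> {i}, j)\<close>, which is
  exactly what (i) and (ii) say. Hence it descends to a homomorphism on the kernel sending
  \<open>\<beta>(S; j)\<close> to \<open>f(S, j)\<close>. Run inside \<open>TW\<^sub>n\<close> itself, it writes every element of the
  kernel as a product of \<open>\<beta>\<close>'s, which are commutators; so the kernel, \<open>K\<close> and the subgroup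
  generated by the \<open>\<beta>\<close>'s coincide.
\<close>

section \<open>The group \<open>TW\<^sub>n\<close> of words\<close>

lemma tw_letters_simps [simp]:
  "[] \<in> tw_letters n"
  "xs @ ys \<in> tw_letters n \<longleftrightarrow> xs \<in> tw_letters n \<and> ys \<in> tw_letters n"
  "x # xs \<in> tw_letters n \<longleftrightarrow> x \<in> {1..<n} \<and> xs \<in> tw_letters n"
  "rev xs \<in> tw_letters n \<longleftrightarrow> xs \<in> tw_letters n"
  by (auto simp: tw_letters_def)

lemma sorted_list_of_set_in_tw_letters: "S \<subseteq> {1..<n} \<Longrightarrow> sorted_list_of_set S \<in> tw_letters n"
  using finite_subset[of S "{1..<n}"] by (simp add: tw_letters_def)

lemma tw_eq_letters: "tw_eq n u v \<Longrightarrow> u \<in> tw_letters n \<and> v \<in> tw_letters n"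
  by (induction rule: tw_eq.induct) auto

lemma tw_eq_context:
  assumes "tw_eq n u v" "xs \<in> tw_letters n" "ys \<in> tw_letters n"
  shows "tw_eq n (xs @ u @ ys) (xs @ v @ ys)"
  using assms
proof (induction rule: tw_eq.induct)
  case (tw_refl w)
  then show ?case by (simp add: tw_eq.tw_refl)
next
  case (tw_sym u w)
  then show ?case by (simp add: tw_eq.tw_sym)
next
  case (tw_trans u v w)
  then show ?case by (meson tw_eq.tw_trans)
next
  case (tw_square as bs i)
  then show ?case using tw_eq.tw_square[of "xs @ as" n "bs @ ys" i] by simp
next
  case (tw_comm as bs i j)
  then show ?case using tw_eq.tw_comm[of "xs @ as" n "bs @ ys" i j] by simp
qed

lemma tw_eq_append:
  assumes "tw_eq n u u'" "tw_eq n v v'"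
  shows "tw_eq n (u @ v) (u' @ v')"
proof -
  have "tw_eq n ([] @ u @ v) ([] @ u' @ v)" "tw_eq n (u' @ v @ []) (u' @ v' @ [])"
    using assms tw_eq_letters by (metis tw_eq_context tw_letters_simps(1))+
  then show ?thesis by (auto intro: tw_eq.tw_trans[of n _ "u' @ v"])
qed

lemma tw_eq_rev_append_cancel: "w \<in> tw_letters n \<Longrightarrow> tw_eq n (rev w @ w) []"
proof (induction w)
  case Nil
  then show ?case by (simp add: tw_eq.tw_refl)
next
  case (Cons x w)
  then have "tw_eq n (rev w @ [x, x] @ w) (rev w @ w)"
    by (intro tw_eq.tw_square) auto
  with Cons show ?case by (auto intro: tw_eq.tw_trans[of n _ "rev w @ w"])
qed

lemma tw_eq_commute_word:
  assumes "i \<in> {1..<n}" "w \<in> tw_letters n" "\<forall>x\<in>set w. i + 1 < x \<or> x + 1 < i"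
  shows "tw_eq n (i # w) (w @ [i])"
  using assms
proof (induction w)
  case Nil
  then show ?case by (simp add: tw_eq.tw_refl)
next
  case (Cons x w)
  then have "tw_eq n ([] @ [i, x] @ w) ([] @ [x, i] @ w)"
    by (intro tw_eq.tw_comm) auto
  moreover have "tw_eq n ([x] @ (i # w) @ []) ([x] @ (w @ [i]) @ [])"
    using Cons by (intro tw_eq_context) auto
  ultimately show ?case by (auto intro: tw_eq.tw_trans[of n _ "x # i # w"])
qed

lemma tw_class_eq_iff:
  assumes "u \<in> tw_letters n" "v \<in> tw_letters n"
  shows "tw_class n u = tw_class n v \<longleftrightarrow> tw_eq n u v"
proof
  assume "tw_class n u = tw_class n v"
  moreover have "u \<in> tw_class n u" using assms by (simp add: tw_class_def tw_eq.tw_refl)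
  ultimately show "tw_eq n u v" by (simp add: tw_class_def)
next
  assume "tw_eq n u v"
  then show "tw_class n u = tw_class n v"
    unfolding tw_class_def by (meson tw_eq.tw_trans tw_eq.tw_sym)
qed

lemma tw_class_square:
  "i \<in> {1..<n} \<Longrightarrow> xs \<in> tw_letters n \<Longrightarrow> ys \<in> tw_letters n \<Longrightarrow>
    tw_class n (xs @ i # i # ys) = tw_class n (xs @ ys)"
  using tw_eq.tw_square[of xs n ys i] by (simp add: tw_class_eq_iff)

lemma tw_class_cancel:
  "w \<in> tw_letters n \<Longrightarrow> xs \<in> tw_letters n \<Longrightarrow> ys \<in> tw_letters n \<Longrightarrow>
    tw_class n (xs @ rev w @ w @ ys) = tw_class n (xs @ ys)"
  using tw_eq_context[OF tw_eq_rev_append_cancel, of w n xs ys] by (simp add: tw_class_eq_iff)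

lemma tw_class_commute:
  "i \<in> {1..<n} \<Longrightarrow> w \<in> tw_letters n \<Longrightarrow> \<forall>x\<in>set w. i + 1 < x \<or> x + 1 < i \<Longrightarrow>
    xs \<in> tw_letters n \<Longrightarrow> ys \<in> tw_letters n \<Longrightarrow>
    tw_class n (xs @ i # w @ ys) = tw_class n (xs @ w @ i # ys)"
  using tw_eq_context[OF tw_eq_commute_word, of i n w xs ys] by (simp add: tw_class_eq_iff)

lemma carrier_TW: "carrier (TW n) = tw_class n ` tw_letters n"
  by (simp add: TW_def)

lemma tw_class_in_carrier: "u \<in> tw_letters n \<Longrightarrow> tw_class n u \<in> carrier (TW n)"
  by (simp add: carrier_TW)

lemma one_TW: "\<one>\<^bsub>TW n\<^esub> = tw_class n []"
  by (simp add: TW_def)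

lemma mult_TW:
  "u \<in> tw_letters n \<Longrightarrow> v \<in> tw_letters n \<Longrightarrow>
    tw_class n u \<otimes>\<^bsub>TW n\<^esub> tw_class n v = tw_class n (u @ v)"
  unfolding TW_def tw_class_def
  by (auto intro: tw_eq.tw_refl) (meson tw_eq.tw_trans tw_eq_append)

lemma group_TW: "group (TW n)"
proof (rule groupI)
  fix x
  assume "x \<in> carrier (TW n)"
  then obtain u where u: "u \<in> tw_letters n" "x = tw_class n u" by (auto simp: carrier_TW)
  then have "tw_class n (rev u) \<otimes>\<^bsub>TW n\<^esub> x = \<one>\<^bsub>TW n\<^esub>"
    by (simp add: mult_TW one_TW tw_class_eq_iff tw_eq_rev_append_cancel)
  with u show "\<exists>y\<in>carrier (TW n). y \<otimes>\<^bsub>TW n\<^esub> x = \<one>\<^bsub>TW n\<^esub>"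
    by (auto simp: carrier_TW)
qed (auto simp: carrier_TW mult_TW one_TW)

lemma inv_TW: "u \<in> tw_letters n \<Longrightarrow> inv\<^bsub>TW n\<^esub> (tw_class n u) = tw_class n (rev u)"
  by (rule group.inv_equality[OF group_TW])
    (simp_all add: mult_TW one_TW tw_class_eq_iff tw_eq_rev_append_cancel carrier_TW)

section \<open>The parity map\<close>

definition toggle :: "'a set \<Rightarrow> 'a \<Rightarrow> 'a set" where
  "toggle s i = (if i \<in> s then s - {i} else insert i s)"

lemma toggle_toggle [simp]: "toggle (toggle s i) i = s"
  by (auto simp: toggle_def)

lemma toggle_commute: "toggle (toggle s i) j = toggle (toggle s j) i"
  by (auto simp: toggle_def)

lemma toggle_subset: "s \<subseteq> A \<Longrightarrow> i \<in> A \<Longrightarrow> toggle s i \<subseteq> A"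
  by (auto simp: toggle_def)

lemma foldl_toggle_subset: "s \<subseteq> A \<Longrightarrow> set w \<subseteq> A \<Longrightarrow> foldl toggle s w \<subseteq> A"
  by (induction w arbitrary: s) (auto simp: toggle_subset)

lemma foldl_toggle_distinct:
  "distinct xs \<Longrightarrow> set xs \<inter> s = {} \<Longrightarrow> foldl toggle s xs = s \<union> set xs"
  by (induction xs arbitrary: s) (auto simp: toggle_def)

lemma mem_foldl_toggle: "x \<in> foldl toggle s w \<longleftrightarrow> (x \<in> s \<longleftrightarrow> even (count_list w x))"
  by (induction w arbitrary: s) (auto simp: toggle_def)

text \<open>By \<open>mem_foldl_toggle\<close>, \<open>foldl toggle {} u\<close> is the set of letters occurring an odd
  number of times in \<open>u\<close>: the image of \<open>u\<close> in the abelianisation of \<open>TW\<^sub>n\<close>.\<close>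

definition parity_kernel :: "nat \<Rightarrow> nat list set set" where
  "parity_kernel n = tw_class n ` {u \<in> tw_letters n. foldl toggle {} u = {}}"

lemma subgroup_parity_kernel: "subgroup (parity_kernel n) (TW n)"
proof
  fix U V
  assume "U \<in> parity_kernel n" "V \<in> parity_kernel n"
  then obtain u v where "u \<in> tw_letters n" "v \<in> tw_letters n" "U = tw_class n u" "V = tw_class n v"
    "foldl toggle {} u = {}" "foldl toggle {} v = {}"
    by (auto simp: parity_kernel_def)
  then show "U \<otimes>\<^bsub>TW n\<^esub> V \<in> parity_kernel n"
    unfolding parity_kernel_def by (intro image_eqI[of _ _ "u @ v"]) (auto simp: mult_TW)
next
  fix U
  assume "U \<in> parity_kernel n"
  then obtain u where "u \<in> tw_letters n" "U = tw_class n u" "foldl toggle {} u = {}"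
    by (auto simp: parity_kernel_def)
  moreover from this have "foldl toggle {} (rev u) = {}"
    using mem_foldl_toggle[of _ "{}" u] mem_foldl_toggle[of _ "{}" "rev u"] by auto
  ultimately show "inv\<^bsub>TW n\<^esub> U \<in> parity_kernel n"
    unfolding parity_kernel_def by (intro image_eqI[of _ _ "rev u"]) (auto simp: inv_TW)
qed (auto simp: parity_kernel_def carrier_TW one_TW)

lemma derived_subset_parity_kernel: "derived (TW n) (carrier (TW n)) \<subseteq> parity_kernel n"
  unfolding derived_def
proof (rule group.generate_subgroup_incl[OF group_TW _ subgroup_parity_kernel], rule subsetI)
  fix x
  assume "x \<in> derived_set (TW n) (carrier (TW n))"
  then obtain a b where ab: "a \<in> tw_letters n" "b \<in> tw_letters n"
    "x = tw_class n a \<otimes>\<^bsub>TW n\<^esub> tw_class n b \<otimes>\<^bsub>TW n\<^esub> inv\<^bsub>TW n\<^esub> tw_class n a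
          \<otimes>\<^bsub>TW n\<^esub> inv\<^bsub>TW n\<^esub> tw_class n b"
    by (auto simp: carrier_TW)
  then have "x = tw_class n (a @ b @ rev a @ rev b)"
    by (simp add: inv_TW mult_TW)
  moreover have "foldl toggle {} (a @ b @ rev a @ rev b) = {}"
    using mem_foldl_toggle[of _ "{}" "a @ b @ rev a @ rev b"] by auto
  ultimately show "x \<in> parity_kernel n"
    using ab unfolding parity_kernel_def by auto
qed

section \<open>Reidemeister--Schreier rewriting\<close>

text \<open>\<open>schreier_letter H f s i\<close> is the image under \<open>f\<close> of the Schreier generator
  \<open>\<rho>(s) \<tau>\<^sub>i \<rho>(s \<triangle> {i})\<^sup>-\<^sup>1\<close>, where \<open>\<rho>(s)\<close> is the class of \<open>sorted_list_of_set s\<close>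
  (see \<open>TW_schreier_letter\<close>). The argument \<open>s\<close> of \<open>schreier_rewrite\<close> is the coset
  reached so far.\<close>

definition schreier_letter ::
    "('h, 'c) monoid_scheme \<Rightarrow> (nat set \<times> nat \<Rightarrow> 'h) \<Rightarrow> nat set \<Rightarrow> nat \<Rightarrow> 'h" where
  "schreier_letter H f s i =
     (if i + 1 \<notin> s then \<one>\<^bsub>H\<^esub>
      else if i \<in> s then inv\<^bsub>H\<^esub> f ({x \<in> s. x < i}, i)
      else f ({x \<in> s. x < i}, i))"

fun schreier_rewrite ::
    "('h, 'c) monoid_scheme \<Rightarrow> (nat set \<times> nat \<Rightarrow> 'h) \<Rightarrow> nat set \<Rightarrow> nat list \<Rightarrow> 'h" where
  "schreier_rewrite H f s [] = \<one>\<^bsub>H\<^esub>"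
| "schreier_rewrite H f s (i # w) =
     schreier_letter H f s i \<otimes>\<^bsub>H\<^esub> schreier_rewrite H f (toggle s i) w"

definition schreier_hom :: "('h, 'c) monoid_scheme \<Rightarrow> (nat set \<times> nat \<Rightarrow> 'h) \<Rightarrow> nat list set \<Rightarrow> 'h" where
  "schreier_hom H f U = schreier_rewrite H f {} (SOME u. u \<in> U)"

lemma schreier_letter_restrict:
  "i + 1 < j \<Longrightarrow> schreier_letter H f {x \<in> s. x < j} i = schreier_letter H f s i"
proof -
  assume "i + 1 < j"
  then have "{x \<in> {x \<in> s. x < j}. x < i} = {x \<in> s. x < i}" by auto
  with \<open>i + 1 < j\<close> show ?thesis by (simp add: schreier_letter_def)
qed

locale beta_assignment = group H for H (structure) +
  fixes n :: nat and f :: "nat set \<times> nat \<Rightarrow> 'a"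
  assumes f_closed: "f ` beta_index n \<subseteq> carrier H"
    and relations: "beta_relations n H f"
begin

lemma f_in_carrier: "j \<in> {1..n-2} \<Longrightarrow> S \<subseteq> {1..<j} \<Longrightarrow> f (S, j) \<in> carrier H"
  using f_closed by (auto simp: beta_index_def)

lemma relation_remove:
  "t \<in> {1..n-2} \<Longrightarrow> 1 \<le> j \<Longrightarrow> j + 2 \<le> t \<Longrightarrow> S \<subseteq> {1..<t} \<Longrightarrow> j \<in> S \<Longrightarrow> j + 1 \<notin> S \<Longrightarrow>
    f (S, t) = f (S - {j}, t)"
  using relations unfolding beta_relations_def by blast

lemma relation_conj:
  "t \<in> {1..n-2} \<Longrightarrow> 1 \<le> j \<Longrightarrow> j + 2 \<le> t \<Longrightarrow> S \<subseteq> {1..<t} \<Longrightarrow> j \<in> S \<Longrightarrow> j + 1 \<in> S \<Longrightarrow>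
    f (S, t) = inv f ({i \<in> S. i < j}, j) \<otimes> f (S - {j}, t) \<otimes> f ({i \<in> S. i < j}, j)"
  using relations unfolding beta_relations_def by blast

lemma schreier_letter_closed:
  "s \<subseteq> {1..<n} \<Longrightarrow> i \<in> {1..<n} \<Longrightarrow> schreier_letter H f s i \<in> carrier H"
  unfolding schreier_letter_def by (auto intro!: f_in_carrier inv_closed)

lemma schreier_letter_toggle:
  assumes "s \<subseteq> {1..<n}" "i \<in> {1..<n}"
  shows "schreier_letter H f (toggle s i) i = inv (schreier_letter H f s i)"
proof -
  have "{x \<in> toggle s i. x < i} = {x \<in> s. x < i}" by (auto simp: toggle_def)
  moreover have "i + 1 \<in> s \<Longrightarrow> f ({x \<in> s. x < i}, i) \<in> carrier H"
    using assms by (intro f_in_carrier) auto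
  ultimately show ?thesis by (auto simp: schreier_letter_def toggle_def)
qed

lemma schreier_letter_conj:
  assumes j: "j \<in> {1..n-2}" and S: "S \<subseteq> {1..<j}" and i: "1 \<le> i" "i + 1 < j"
  shows "schreier_letter H f S i \<otimes> f (toggle S i, j) = f (S, j) \<otimes> schreier_letter H f S i"
proof -
  define B where "B = {x \<in> S. x < i}"
  have fB: "f (B, i) \<in> carrier H" and fS: "f (S, j) \<in> carrier H"
    using j S i by (auto simp: B_def intro!: f_in_carrier)
  consider (low) "i + 1 \<notin> S" | (out) "i + 1 \<in> S" "i \<notin> S" | (both) "i + 1 \<in> S" "i \<in> S"
    by blast
  then show ?thesis
  proof cases
    case low
    have "f (toggle S i, j) = f (S, j)"
      using relation_remove[of j i S] relation_remove[of j i "insert i S"] low j S i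
      by (auto simp: toggle_def insert_absorb)
    with low fS show ?thesis by (simp add: schreier_letter_def)
  next
    case out
    have "{x \<in> insert i S. x < i} = B" "insert i S - {i} = S"
      using out by (auto simp: B_def)
    then have "f (insert i S, j) = inv f (B, i) \<otimes> f (S, j) \<otimes> f (B, i)"
      using relation_conj[of j i "insert i S"] out j S i by auto
    with out fB fS show ?thesis
      by (simp add: schreier_letter_def toggle_def B_def m_assoc[symmetric])
  next
    case both
    have "{x \<in> S. x < i} = B" by (simp add: B_def)
    then have "f (S, j) = inv f (B, i) \<otimes> f (S - {i}, j) \<otimes> f (B, i)"
      using relation_conj[of j i S] both j S i by auto
    moreover have "f (S - {i}, j) \<in> carrier H"
      using j S by (intro f_in_carrier) auto
    ultimately show ?thesis using both fB
      by (simp add: schreier_letter_def toggle_def B_def m_assoc)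
  qed
qed

lemma schreier_letter_commute:
  assumes s: "s \<subseteq> {1..<n}" and ij: "1 \<le> i" "i + 1 < j" "j < n"
  shows "schreier_letter H f s i \<otimes> schreier_letter H f (toggle s i) j =
    schreier_letter H f s j \<otimes> schreier_letter H f (toggle s j) i"
proof -
  define A where "A = {x \<in> s. x < j}"
  define c where "c = schreier_letter H f A i"
  have "{x \<in> toggle s j. x < j} = A" by (auto simp: A_def toggle_def)
  then have c_eq: "schreier_letter H f s i = c" "schreier_letter H f (toggle s j) i = c"
    unfolding c_def A_def by (metis schreier_letter_restrict[OF ij(2)])+
  have c_closed: "c \<in> carrier H"
    unfolding c_def A_def using s ij by (intro schreier_letter_closed) auto
  show ?thesis
  proof (cases "j + 1 \<in> s")
    case False
    then have "j + 1 \<notin> toggle s i" using ij by (auto simp: toggle_def)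
    with False c_eq c_closed show ?thesis by (simp add: schreier_letter_def)
  next
    case True
    have toggle_A: "{x \<in> toggle s i. x < j} = toggle A i" "(j \<in> toggle s i) = (j \<in> s)"
      "j + 1 \<in> toggle s i"
      using ij True by (auto simp: A_def toggle_def)
    have A: "j \<in> {1..n-2}" "A \<subseteq> {1..<j}" "toggle A i \<subseteq> {1..<j}"
      using True s ij by (auto simp: A_def toggle_def)
    have closed: "f (A, j) \<in> carrier H" "f (toggle A i, j) \<in> carrier H"
      using f_in_carrier[OF A(1,2)] f_in_carrier[OF A(1,3)] .
    have conj: "c \<otimes> f (toggle A i, j) = f (A, j) \<otimes> c"
      unfolding c_def using schreier_letter_conj[OF A(1,2) ij(1,2)] .
    show ?thesis
    proof (cases "j \<in> s")
      case False
      with True toggle_A conj c_eq show ?thesis by (simp add: schreier_letter_def A_def)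
    next
      case j_in: True
      have "c \<otimes> inv f (toggle A i, j) = inv f (A, j) \<otimes> c"
        using conj closed c_closed
        by (metis inv_solve_left inv_solve_right m_assoc m_closed inv_closed)
      with True j_in toggle_A c_eq show ?thesis by (simp add: schreier_letter_def A_def)
    qed
  qed
qed

lemma schreier_rewrite_closed:
  "s \<subseteq> {1..<n} \<Longrightarrow> w \<in> tw_letters n \<Longrightarrow> schreier_rewrite H f s w \<in> carrier H"
  by (induction w arbitrary: s) (auto simp: schreier_letter_closed toggle_subset)

lemma schreier_rewrite_append:
  assumes "s \<subseteq> {1..<n}" "u \<in> tw_letters n" "v \<in> tw_letters n"
  shows "schreier_rewrite H f s (u @ v) =
    schreier_rewrite H f s u \<otimes> schreier_rewrite H f (foldl toggle s u) v"
  using assms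
proof (induction u arbitrary: s)
  case Nil
  then show ?case by (simp add: schreier_rewrite_closed)
next
  case (Cons i u)
  have "toggle s i \<subseteq> {1..<n}" "foldl toggle (toggle s i) u \<subseteq> {1..<n}"
    using Cons.prems by (auto simp: toggle_subset foldl_toggle_subset tw_letters_def)
  with Cons show ?case
    by (simp add: m_assoc schreier_letter_closed schreier_rewrite_closed)
qed

lemma schreier_rewrite_context:
  assumes "s \<subseteq> {1..<n}" "xs \<in> tw_letters n" "u \<in> tw_letters n" "v \<in> tw_letters n"
    "ys \<in> tw_letters n"
    and "schreier_rewrite H f (foldl toggle s xs) u = schreier_rewrite H f (foldl toggle s xs) v"
    and "foldl toggle (foldl toggle s xs) u = foldl toggle (foldl toggle s xs) v"
  shows "schreier_rewrite H f s (xs @ u @ ys) = schreier_rewrite H f s (xs @ v @ ys)"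
proof -
  have "foldl toggle s xs \<subseteq> {1..<n}"
    using assms(1,2) by (auto simp: foldl_toggle_subset tw_letters_def)
  with assms show ?thesis by (simp add: schreier_rewrite_append del: foldl_append)
qed

lemma schreier_rewrite_tw_eq:
  "tw_eq n u v \<Longrightarrow> s \<subseteq> {1..<n} \<Longrightarrow> schreier_rewrite H f s u = schreier_rewrite H f s v"
proof (induction arbitrary: s rule: tw_eq.induct)
  case (tw_square xs ys i)
  define s' where "s' = foldl toggle s xs"
  have "s' \<subseteq> {1..<n}"
    using tw_square by (auto simp: s'_def foldl_toggle_subset tw_letters_def)
  with tw_square show ?case
    using schreier_rewrite_context[of s xs "[i, i]" "[]" ys]
    by (simp add: s'_def[symmetric] schreier_letter_toggle schreier_letter_closed)
next
  case (tw_comm xs ys i j)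
  define s' where "s' = foldl toggle s xs"
  have s': "s' \<subseteq> {1..<n}"
    using tw_comm by (auto simp: s'_def foldl_toggle_subset tw_letters_def)
  have "schreier_rewrite H f s' [i, j] = schreier_rewrite H f s' [j, i]"
  proof -
    have "schreier_letter H f s' i \<otimes> schreier_letter H f (toggle s' i) j =
        schreier_letter H f s' j \<otimes> schreier_letter H f (toggle s' j) i"
      using tw_comm.hyps(3-5) schreier_letter_commute[OF s', of i j]
        schreier_letter_commute[OF s', of j i] by auto
    moreover have "toggle s' i \<subseteq> {1..<n}" "toggle s' j \<subseteq> {1..<n}"
      using s' tw_comm.hyps(3,4) by (auto simp: toggle_subset)
    ultimately show ?thesis
      using tw_comm.hyps(3,4) by (simp add: schreier_letter_closed)
  qed
  with s' tw_comm show ?case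
    using schreier_rewrite_context[of s xs "[i, j]" "[j, i]" ys]
    by (simp add: s'_def[symmetric] toggle_commute)
qed auto

lemma schreier_hom_tw_class:
  assumes "u \<in> tw_letters n"
  shows "schreier_hom H f (tw_class n u) = schreier_rewrite H f {} u"
proof -
  have "u \<in> tw_class n u" using assms by (simp add: tw_class_def tw_eq.tw_refl)
  then have "tw_eq n (SOME v. v \<in> tw_class n u) u"
    by (metis mem_Collect_eq someI tw_class_def)
  then show ?thesis by (simp add: schreier_hom_def schreier_rewrite_tw_eq)
qed

lemma schreier_hom_hom: "schreier_hom H f \<in> hom ((TW n)\<lparr>carrier := parity_kernel n\<rparr>) H"
proof (rule homI)
  fix U
  assume "U \<in> carrier ((TW n)\<lparr>carrier := parity_kernel n\<rparr>)"
  then obtain u where "u \<in> tw_letters n" "U = tw_class n u"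
    by (auto simp: parity_kernel_def)
  then show "schreier_hom H f U \<in> carrier H"
    by (simp add: schreier_hom_tw_class schreier_rewrite_closed)
next
  fix U V
  assume "U \<in> carrier ((TW n)\<lparr>carrier := parity_kernel n\<rparr>)"
    "V \<in> carrier ((TW n)\<lparr>carrier := parity_kernel n\<rparr>)"
  then obtain u v where "u \<in> tw_letters n" "U = tw_class n u" "foldl toggle {} u = {}"
    "v \<in> tw_letters n" "V = tw_class n v"
    by (auto simp: parity_kernel_def)
  then show "schreier_hom H f (U \<otimes>\<^bsub>(TW n)\<lparr>carrier := parity_kernel n\<rparr>\<^esub> V) =
      schreier_hom H f U \<otimes> schreier_hom H f V"
    by (simp add: mult_TW schreier_hom_tw_class schreier_rewrite_append)
qed

lemma schreier_rewrite_ascending: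
  "sorted_wrt (<) xs \<Longrightarrow> \<forall>y\<in>s. \<forall>x\<in>set xs. y < x \<Longrightarrow> schreier_rewrite H f s xs = \<one>"
proof (induction xs arbitrary: s)
  case (Cons x xs)
  then have "schreier_letter H f s x = \<one>" "toggle s x = insert x s"
    by (auto simp: schreier_letter_def toggle_def)
  with Cons show ?case by auto
qed simp

lemma schreier_rewrite_descending:
  "sorted_wrt (<) xs \<Longrightarrow> schreier_rewrite H f (set xs) (rev xs) = \<one>"
proof (induction xs rule: rev_induct)
  case (snoc x xs)
  then have "schreier_letter H f (insert x (set xs)) x = \<one>" "toggle (insert x (set xs)) x = set xs"
    by (auto simp: schreier_letter_def toggle_def sorted_wrt_append)
  with snoc show ?case by (simp add: sorted_wrt_append)
qed simp

lemma schreier_hom_beta: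
  assumes "(S, j) \<in> beta_index n"
  shows "schreier_hom H f (beta n S j) = f (S, j)"
proof -
  have S: "S \<subseteq> {1..<j}" "j \<in> {1..n-2}" using assms by (auto simp: beta_index_def)
  define xs where "xs = sorted_list_of_set S"
  have "finite S" using finite_subset[OF S(1)] by blast
  then have xs: "sorted_wrt (<) xs" "set xs = S" "xs \<in> tw_letters n"
    using S by (auto simp: xs_def subset_iff intro!: sorted_list_of_set_in_tw_letters)
  have "j \<notin> S" "j + 1 \<notin> S" "j + 2 \<notin> S" "{x \<in> insert (j + 1) S. x < j} = S"
    using S by auto
  then have "schreier_rewrite H f S [j + 1, j, j + 1, j] = f (S, j)"
    and "foldl toggle S [j + 1, j, j + 1, j] = S"
    using f_in_carrier[OF S(2,1)] by (auto simp: schreier_letter_def toggle_def)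
  moreover have "foldl toggle {} xs = S" and "schreier_rewrite H f {} xs = \<one>"
    using xs schreier_rewrite_ascending[of xs "{}"] by (simp_all add: xs_def foldl_toggle_distinct)
  moreover have "schreier_rewrite H f S (rev xs) = \<one>"
    using schreier_rewrite_descending[OF xs(1)] xs(2) by simp
  moreover have "j + 1 \<in> {1..<n}" "j \<in> {1..<n}" "S \<subseteq> {1..<n}"
    using S by (auto simp: subset_iff)
  ultimately show ?thesis
    using xs f_in_carrier[OF S(2,1)]
    by (simp add: beta_def schreier_hom_tw_class schreier_rewrite_append flip: xs_def
        del: append_Cons append_Nil)
qed

lemma schreier_rewrite_in_generate:
  "s \<subseteq> {1..<n} \<Longrightarrow> w \<in> tw_letters n \<Longrightarrow> schreier_rewrite H f s w \<in> generate H (f ` beta_index n)"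
proof (induction w arbitrary: s)
  case Nil
  then show ?case by (simp add: generate.one)
next
  case (Cons i w)
  have "i + 1 \<in> s \<Longrightarrow> f ({x \<in> s. x < i}, i) \<in> f ` beta_index n"
    using Cons.prems by (intro imageI) (auto simp: beta_index_def)
  then have "schreier_letter H f s i \<in> generate H (f ` beta_index n)"
    unfolding schreier_letter_def by (auto intro: generate.one generate.incl generate.inv)
  moreover have "schreier_rewrite H f (toggle s i) w \<in> generate H (f ` beta_index n)"
    using Cons by (simp add: toggle_subset)
  ultimately show ?case by (simp add: generate.eng)
qed

end

section \<open>The generators \<open>\<beta>(S; j)\<close> in \<open>TW\<^sub>n\<close>\<close>

lemma sorted_list_of_set_eqI:
  assumes "sorted xs" "distinct xs" "set xs = A"
  shows "sorted_list_of_set A = xs"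
  using assms by (intro sorted_distinct_set_unique) auto

abbreviation beta_family :: "nat \<Rightarrow> nat set \<times> nat \<Rightarrow> nat list set" where
  "beta_family n \<equiv> \<lambda>(S, j). beta n S j"

lemma beta_index_letters:
  "(S, j) \<in> beta_index n \<Longrightarrow> S \<subseteq> {1..<n} \<and> j \<in> {1..<n} \<and> j + 1 \<in> {1..<n}"
  by (auto simp: beta_index_def subset_iff)

lemma beta_in_carrier: "(S, j) \<in> beta_index n \<Longrightarrow> beta n S j \<in> carrier (TW n)"
  by (drule beta_index_letters)
    (simp add: beta_def tw_class_in_carrier sorted_list_of_set_in_tw_letters)

lemma beta_in_derived_set:
  assumes "(S, j) \<in> beta_index n"
  shows "beta n S j \<in> derived_set (TW n) (carrier (TW n))"
proof -
  define P where "P = sorted_list_of_set S"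
  have P: "P \<in> tw_letters n" and j: "j \<in> {1..<n}" "Suc j \<in> {1..<n}"
    using beta_index_letters[OF assms] by (simp_all add: P_def sorted_list_of_set_in_tw_letters)
  define a where "a = tw_class n (P @ [Suc j] @ rev P)"
  define b where "b = tw_class n (P @ [j] @ rev P)"
  have ab: "a \<in> carrier (TW n)" "b \<in> carrier (TW n)"
    unfolding a_def b_def using P j by (auto intro!: tw_class_in_carrier)
  have "a \<otimes>\<^bsub>TW n\<^esub> b \<otimes>\<^bsub>TW n\<^esub> inv\<^bsub>TW n\<^esub> a \<otimes>\<^bsub>TW n\<^esub> inv\<^bsub>TW n\<^esub> b
      = tw_class n (P @ Suc j # rev P @ P @ j # rev P @ P @ Suc j # rev P @ P @ j # rev P)"
    unfolding a_def b_def using P j by (simp add: inv_TW mult_TW)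
  also have "\<dots> = tw_class n (P @ Suc j # j # rev P @ P @ Suc j # rev P @ P @ j # rev P)"
    using tw_class_cancel[OF P, of "P @ [Suc j]" "j # rev P @ P @ Suc j # rev P @ P @ j # rev P"]
      P j by simp
  also have "\<dots> = tw_class n (P @ Suc j # j # Suc j # rev P @ P @ j # rev P)"
    using tw_class_cancel[OF P, of "P @ [Suc j, j]" "Suc j # rev P @ P @ j # rev P"] P j by simp
  also have "\<dots> = tw_class n (P @ Suc j # j # Suc j # j # rev P)"
    using tw_class_cancel[OF P, of "P @ [Suc j, j, Suc j]" "j # rev P"] P j by simp
  also have "\<dots> = beta n S j" by (simp add: beta_def P_def)
  finally show ?thesis using ab by blast
qed

lemma TW_beta_remove:
  assumes t: "t \<in> {1..n-2}" and j: "1 \<le> j" "j + 2 \<le> t"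
    and S: "S \<subseteq> {1..<t}" "j \<in> S" "j + 1 \<notin> S"
  shows "beta n S t = beta n (S - {j}) t"
proof -
  have fin: "finite S" using S(1) finite_subset by blast
  define A where "A = sorted_list_of_set {x \<in> S. x < j}"
  define C where "C = sorted_list_of_set {x \<in> S. j < x}"
  define M where "M = C @ [Suc t, t, Suc t, t] @ rev C"
  \<comment> \<open>\<open>fin\<close> goes to the simplifier, not into the premises: with \<open>finite S\<close> among the
    premises, \<open>auto\<close> does not terminate on the remaining set equation.\<close>
  have split_S: "sorted_list_of_set S = A @ j # C"
    using S(2) unfolding A_def C_def by (intro sorted_list_of_set_eqI)
      (simp_all add: fin sorted_append disjoint_iff less_imp_le, auto simp: set_eq_iff)
  have split_S': "sorted_list_of_set (S - {j}) = A @ C"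
    unfolding A_def C_def by (intro sorted_list_of_set_eqI)
      (simp_all add: fin sorted_append disjoint_iff less_imp_le, auto simp: set_eq_iff)
  have letters: "A \<in> tw_letters n" "M \<in> tw_letters n" "j \<in> {1..<n}"
    using S t j
    by (auto simp: A_def C_def M_def subset_iff intro!: sorted_list_of_set_in_tw_letters)
  have far: "\<forall>x\<in>set M. j + 1 < x \<or> x + 1 < j"
    using fin S(3) j by (auto simp: M_def C_def intro!: Suc_lessI)
  have "beta n S t = tw_class n (A @ j # M @ j # rev A)"
    by (simp add: beta_def split_S split_S' M_def)
  also have "\<dots> = tw_class n (A @ M @ j # j # rev A)"
    using tw_class_commute[OF letters(3,2) far letters(1), of "j # rev A"] letters by simp
  also have "\<dots> = tw_class n (A @ M @ rev A)"
    using tw_class_square[OF letters(3), of "A @ M" "rev A"] letters by simp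
  also have "\<dots> = beta n (S - {j}) t"
    by (simp add: beta_def split_S split_S' M_def)
  finally show ?thesis .
qed

lemma TW_beta_conj:
  assumes t: "t \<in> {1..n-2}" and j: "1 \<le> j" "j + 2 \<le> t"
    and S: "S \<subseteq> {1..<t}" "j \<in> S" "j + 1 \<in> S"
  shows "beta n S t = inv\<^bsub>TW n\<^esub> (beta n {i \<in> S. i < j} j) \<otimes>\<^bsub>TW n\<^esub> beta n (S - {j}) t
     \<otimes>\<^bsub>TW n\<^esub> beta n {i \<in> S. i < j} j"
proof -
  have fin: "finite S" using S(1) finite_subset by blast
  define A where "A = sorted_list_of_set {x \<in> S. x < j}"
  define B where "B = sorted_list_of_set {x \<in> S. Suc j < x}"
  define M where "M = B @ [Suc t, t, Suc t, t] @ rev B"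
  have split_S: "sorted_list_of_set S = A @ j # Suc j # B"
    using S(2,3) unfolding A_def B_def by (intro sorted_list_of_set_eqI)
      (simp_all add: fin sorted_append disjoint_iff less_imp_le, auto simp: set_eq_iff)
  have split_S': "sorted_list_of_set (S - {j}) = A @ Suc j # B"
    using S(3) unfolding A_def B_def by (intro sorted_list_of_set_eqI)
      (simp_all add: fin sorted_append disjoint_iff less_imp_le, auto simp: set_eq_iff)
  have letters: "A \<in> tw_letters n" "M \<in> tw_letters n" "j \<in> {1..<n}" "Suc j \<in> {1..<n}"
    using S t j
    by (auto simp: A_def B_def M_def subset_iff intro!: sorted_list_of_set_in_tw_letters)
  have far: "\<forall>x\<in>set M. j + 1 < x \<or> x + 1 < j"
    using fin j by (auto simp: M_def B_def)
  have "inv\<^bsub>TW n\<^esub> (beta n {i \<in> S. i < j} j) \<otimes>\<^bsub>TW n\<^esub> beta n (S - {j}) t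
        \<otimes>\<^bsub>TW n\<^esub> beta n {i \<in> S. i < j} j
      = tw_class n (A @ j # Suc j # j # Suc j # rev A @ A @ Suc j # M @ Suc j # rev A
          @ A @ Suc j # j # Suc j # j # rev A)"
    using letters by (simp add: beta_def split_S split_S' M_def inv_TW mult_TW flip: A_def)
  also have "\<dots> = tw_class n (A @ j # Suc j # j # Suc j # Suc j # M @ Suc j # rev A
      @ A @ Suc j # j # Suc j # j # rev A)"
    using tw_class_cancel[OF letters(1), of "A @ [j, Suc j, j, Suc j]"
      "Suc j # M @ Suc j # rev A @ A @ Suc j # j # Suc j # j # rev A"] letters by simp
  also have "\<dots> = tw_class n (A @ j # Suc j # j # Suc j # Suc j # M @ Suc j # Suc j # j # Suc j # j
      # rev A)"
    using tw_class_cancel[OF letters(1), of "A @ [j, Suc j, j, Suc j, Suc j] @ M @ [Suc j]"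
      "Suc j # j # Suc j # j # rev A"] letters by simp
  also have "\<dots> = tw_class n (A @ j # Suc j # j # M @ Suc j # Suc j # j # Suc j # j # rev A)"
    using tw_class_square[OF letters(4), of "A @ [j, Suc j, j]"
      "M @ Suc j # Suc j # j # Suc j # j # rev A"] letters by simp
  also have "\<dots> = tw_class n (A @ j # Suc j # j # M @ j # Suc j # j # rev A)"
    using tw_class_square[OF letters(4), of "A @ [j, Suc j, j] @ M" "j # Suc j # j # rev A"] letters
    by simp
  also have "\<dots> = tw_class n (A @ j # Suc j # M @ j # j # Suc j # j # rev A)"
    using tw_class_commute[OF letters(3,2) far, of "A @ [j, Suc j]" "j # Suc j # j # rev A"] letters
    by simp
  also have "\<dots> = tw_class n (A @ j # Suc j # M @ Suc j # j # rev A)"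
    using tw_class_square[OF letters(3), of "A @ [j, Suc j] @ M" "Suc j # j # rev A"] letters
    by simp
  also have "\<dots> = beta n S t"
    by (simp add: beta_def split_S split_S' M_def)
  finally show ?thesis by (rule sym)
qed

lemma TW_beta_relations: "beta_relations n (TW n) (beta_family n)"
  unfolding beta_relations_def using TW_beta_remove TW_beta_conj by simp

lemma beta_assignment_TW: "beta_assignment (TW n) n (beta_family n)"
  by (intro beta_assignment.intro beta_assignment_axioms.intro group_TW TW_beta_relations)
    (auto intro: beta_in_carrier)

lemma TW_schreier_letter_insert:
  assumes s: "s \<subseteq> {1..<n}" and i: "i \<in> {1..<n}" "i \<notin> s"
  shows "schreier_letter (TW n) (beta_family n) s i \<otimes>\<^bsub>TW n\<^esub>
      tw_class n (sorted_list_of_set (insert i s))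
    = tw_class n (sorted_list_of_set s @ [i])"
proof -
  have fin: "finite s" using s finite_subset by blast
  define A where "A = sorted_list_of_set {x \<in> s. x < i}"
  have A: "A \<in> tw_letters n"
    using s unfolding A_def by (intro sorted_list_of_set_in_tw_letters) auto
  show ?thesis
  proof (cases "i + 1 \<in> s")
    case False
    define C where "C = sorted_list_of_set {x \<in> s. i < x}"
    have split_s: "sorted_list_of_set s = A @ C"
      using i(2) unfolding A_def C_def by (intro sorted_list_of_set_eqI)
        (simp_all add: fin sorted_append disjoint_iff less_imp_le,
         auto simp: set_eq_iff not_less le_less)
    have split_insert: "sorted_list_of_set (insert i s) = A @ i # C"
      unfolding A_def C_def by (intro sorted_list_of_set_eqI)
        (simp_all add: fin sorted_append disjoint_iff less_imp_le, auto simp: set_eq_iff)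
    have C: "C \<in> tw_letters n"
      using s unfolding C_def by (intro sorted_list_of_set_in_tw_letters) auto
    have far: "\<forall>x\<in>set C. i + 1 < x \<or> x + 1 < i"
      using fin False by (auto simp: C_def intro!: Suc_lessI)
    have "tw_class n (A @ i # C @ []) = tw_class n (A @ C @ [i])"
      by (rule tw_class_commute[OF i(1) C far A]) simp
    with False A C i show ?thesis
      by (simp add: schreier_letter_def split_s split_insert one_TW mult_TW)
  next
    case True
    define B where "B = sorted_list_of_set {x \<in> s. Suc i < x}"
    have split_s: "sorted_list_of_set s = A @ Suc i # B"
      using i(2) True unfolding A_def B_def by (intro sorted_list_of_set_eqI)
        (simp_all add: fin sorted_append disjoint_iff less_imp_le,
         auto simp: set_eq_iff not_less le_less less_Suc_eq)
    have split_insert: "sorted_list_of_set (insert i s) = A @ i # Suc i # B"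
      using True unfolding A_def B_def by (intro sorted_list_of_set_eqI)
        (simp_all add: fin sorted_append disjoint_iff less_imp_le, auto simp: set_eq_iff)
    have B: "B \<in> tw_letters n"
      using s unfolding B_def by (intro sorted_list_of_set_in_tw_letters) auto
    have far: "\<forall>x\<in>set B. i + 1 < x \<or> x + 1 < i"
      using fin by (auto simp: B_def)
    have i1: "Suc i \<in> {1..<n}" using True s by auto
    have "schreier_letter (TW n) (beta_family n) s i \<otimes>\<^bsub>TW n\<^esub>
        tw_class n (sorted_list_of_set (insert i s))
        = tw_class n (A @ Suc i # i # Suc i # i # rev A @ A @ i # Suc i # B)"
      using True i A B i1
      by (simp add: schreier_letter_def beta_def split_insert mult_TW flip: A_def)
    also have "\<dots> = tw_class n (A @ Suc i # i # Suc i # i # i # Suc i # B)"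
      using tw_class_cancel[OF A, of "A @ [Suc i, i, Suc i, i]" "i # Suc i # B"] A B i i1 by simp
    also have "\<dots> = tw_class n (A @ Suc i # i # Suc i # Suc i # B)"
      using tw_class_square[OF i(1), of "A @ [Suc i, i, Suc i]" "Suc i # B"] A B i i1 by simp
    also have "\<dots> = tw_class n (A @ Suc i # i # B)"
      using tw_class_square[OF i1, of "A @ [Suc i, i]" B] A B i i1 by simp
    also have "\<dots> = tw_class n (A @ Suc i # B @ [i])"
      using tw_class_commute[OF i(1) B far, of "A @ [Suc i]" "[]"] A i i1 by simp
    finally show ?thesis by (simp add: split_s)
  qed
qed

lemma TW_schreier_letter:
  assumes s: "s \<subseteq> {1..<n}" and i: "i \<in> {1..<n}"
  shows "schreier_letter (TW n) (beta_family n) s i \<otimes>\<^bsub>TW n\<^esub>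
      tw_class n (sorted_list_of_set (toggle s i))
    = tw_class n (sorted_list_of_set s @ [i])"
proof (cases "i \<in> s")
  case False
  then show ?thesis using TW_schreier_letter_insert[OF s i False] by (simp add: toggle_def)
next
  case True
  interpret TW: beta_assignment "TW n" n "beta_family n" by (rule beta_assignment_TW)
  define t where "t = s - {i}"
  have t: "t \<subseteq> {1..<n}" "i \<notin> t" "insert i t = s" "toggle s i = t" "toggle t i = s"
    using s True by (auto simp: t_def toggle_def)
  define g where "g = schreier_letter (TW n) (beta_family n) t i"
  have g: "g \<in> carrier (TW n)" "schreier_letter (TW n) (beta_family n) s i = inv\<^bsub>TW n\<^esub> g"
    using TW.schreier_letter_closed[OF t(1) i] TW.schreier_letter_toggle[OF t(1) i] t(5)
    by (simp_all add: g_def)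
  have letters: "sorted_list_of_set s \<in> tw_letters n" "sorted_list_of_set t \<in> tw_letters n"
    using s t(1) by (simp_all add: sorted_list_of_set_in_tw_letters)
  have "inv\<^bsub>TW n\<^esub> g \<otimes>\<^bsub>TW n\<^esub> tw_class n (sorted_list_of_set t)
      = inv\<^bsub>TW n\<^esub> g \<otimes>\<^bsub>TW n\<^esub> (tw_class n (sorted_list_of_set t @ [i]) \<otimes>\<^bsub>TW n\<^esub> tw_class n [i])"
    using tw_class_square[OF i, of "sorted_list_of_set t" "[]"] letters i by (simp add: mult_TW)
  also have "\<dots> = inv\<^bsub>TW n\<^esub> g \<otimes>\<^bsub>TW n\<^esub>
      (g \<otimes>\<^bsub>TW n\<^esub> tw_class n (sorted_list_of_set s) \<otimes>\<^bsub>TW n\<^esub> tw_class n [i])"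
    using TW_schreier_letter_insert[OF t(1) i t(2)] by (simp add: g_def t(3))
  also have "\<dots> = tw_class n (sorted_list_of_set s @ [i])"
    using g letters i by (simp add: TW.m_assoc[symmetric] tw_class_in_carrier mult_TW)
  finally show ?thesis by (simp add: g t(4))
qed

lemma TW_schreier_rewrite:
  assumes "s \<subseteq> {1..<n}" "w \<in> tw_letters n"
  shows "schreier_rewrite (TW n) (beta_family n) s w \<otimes>\<^bsub>TW n\<^esub>
      tw_class n (sorted_list_of_set (foldl toggle s w))
    = tw_class n (sorted_list_of_set s @ w)"
proof -
  interpret TW: beta_assignment "TW n" n "beta_family n" by (rule beta_assignment_TW)
  show ?thesis
    using assms
  proof (induction w arbitrary: s)
    case Nil
    then show ?case by (simp add: tw_class_in_carrier sorted_list_of_set_in_tw_letters)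
  next
    case (Cons i w)
    have i: "i \<in> {1..<n}" and w: "w \<in> tw_letters n" and s': "toggle s i \<subseteq> {1..<n}"
      using Cons.prems by (auto simp: toggle_subset)
    have "foldl toggle (toggle s i) w \<subseteq> {1..<n}"
      using s' w by (simp add: foldl_toggle_subset tw_letters_def)
    with Cons.prems i w s' have closed:
      "schreier_letter (TW n) (beta_family n) s i \<in> carrier (TW n)"
      "schreier_rewrite (TW n) (beta_family n) (toggle s i) w \<in> carrier (TW n)"
      "tw_class n (sorted_list_of_set (foldl toggle (toggle s i) w)) \<in> carrier (TW n)"
      "tw_class n (sorted_list_of_set (toggle s i)) \<in> carrier (TW n)"
      "tw_class n w \<in> carrier (TW n)"
      by (blast intro: TW.schreier_letter_closed TW.schreier_rewrite_closed tw_class_in_carrier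
          sorted_list_of_set_in_tw_letters)+
    have "schreier_rewrite (TW n) (beta_family n) s (i # w) \<otimes>\<^bsub>TW n\<^esub>
        tw_class n (sorted_list_of_set (foldl toggle s (i # w)))
      = schreier_letter (TW n) (beta_family n) s i \<otimes>\<^bsub>TW n\<^esub>
        tw_class n (sorted_list_of_set (toggle s i) @ w)"
      using Cons.IH[OF s' w] closed by (simp add: TW.m_assoc)
    also have "\<dots> = tw_class n (sorted_list_of_set s @ [i]) \<otimes>\<^bsub>TW n\<^esub> tw_class n w"
      using TW_schreier_letter[OF Cons.prems(1) i] closed s' w
      by (simp add: mult_TW[symmetric] sorted_list_of_set_in_tw_letters TW.m_assoc[symmetric])
    also have "\<dots> = tw_class n (sorted_list_of_set s @ i # w)"
      using Cons.prems by (simp add: mult_TW sorted_list_of_set_in_tw_letters)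
    finally show ?case .
  qed
qed

lemma parity_kernel_subset_generate:
  "parity_kernel n \<subseteq> generate (TW n) (beta_family n ` beta_index n)"
proof
  interpret TW: beta_assignment "TW n" n "beta_family n" by (rule beta_assignment_TW)
  fix U
  assume "U \<in> parity_kernel n"
  then obtain u where u: "u \<in> tw_letters n" "U = tw_class n u" "foldl toggle {} u = {}"
    by (auto simp: parity_kernel_def)
  have "schreier_rewrite (TW n) (beta_family n) {} u = U"
    using TW_schreier_rewrite[of "{}" n u] u TW.schreier_rewrite_closed[of "{}" u]
    by (simp flip: one_TW)
  then show "U \<in> generate (TW n) (beta_family n ` beta_index n)"
    using TW.schreier_rewrite_in_generate[of "{}" u] u by simp
qed

theorem lemma3p3:
  fixes n :: nat
  assumes "n \<ge> 3"
  defines "K \<equiv> derived (TW n) (carrier (TW n))"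
  shows "(\<lambda>(S, j). beta n S j) ` beta_index n \<subseteq> K
    \<and> generate (TW n) ((\<lambda>(S, j). beta n S j) ` beta_index n) = K
    \<and> beta_relations n (TW n) (\<lambda>(S, j). beta n S j)
    \<and> (\<forall>(H :: ('h, 'c) monoid_scheme) (f :: nat set \<times> nat \<Rightarrow> 'h).
          group H \<and> f ` beta_index n \<subseteq> carrier H \<and> beta_relations n H f \<longrightarrow>
          (\<exists>h \<in> hom ((TW n)\<lparr>carrier := K\<rparr>) H.
             \<forall>(S, j) \<in> beta_index n. h (beta n S j) = f (S, j)))"
proof -
  interpret TW: group "TW n" by (rule group_TW)
  have K_subgroup: "subgroup K (TW n)"
    unfolding K_def by (rule TW.derived_is_subgroup) simp
  have K_kernel: "K \<subseteq> parity_kernel n"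
    unfolding K_def by (rule derived_subset_parity_kernel)
  have gens: "beta_family n ` beta_index n \<subseteq> K"
    using beta_in_derived_set unfolding K_def derived_def by (auto intro: generate.incl)
  have "generate (TW n) (beta_family n ` beta_index n) = K"
    using TW.generate_subgroup_incl[OF gens K_subgroup] K_kernel parity_kernel_subset_generate
    by blast
  moreover have
    "\<exists>h \<in> hom ((TW n)\<lparr>carrier := K\<rparr>) H. \<forall>(S, j) \<in> beta_index n. h (beta n S j) = f (S, j)"
    if "group H \<and> f ` beta_index n \<subseteq> carrier H \<and> beta_relations n H f"
    for H :: "('h, 'c) monoid_scheme" and f
  proof -
    interpret beta_assignment H n f
      using that by (intro beta_assignment.intro beta_assignment_axioms.intro) auto
    have "schreier_hom H f \<in> hom ((TW n)\<lparr>carrier := K\<rparr>) H"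
      using schreier_hom_hom K_kernel by (auto simp: hom_def)
    then show ?thesis using schreier_hom_beta by blast
  qed
  ultimately show ?thesis using gens TW_beta_relations by blast
qed

end
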